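(* Let $G$ be a strongly connected digraph with at least two vertices. Then for every arc $(v,w)$ of $G$ there exists an arc $(a,b)$ of $G$ that is a good arc for $(v,w)$.
   Context: Digraphs may have loops but no multiple arcs; paths are directed, without repeated vertices, and a path from a vertex to itself may have length $0$. For a set or element $X$ of arcs, $G\setminus X$ is the digraph obtained by removing $X$. Given arcs $(a,b)$ and $(v,w)$ of $G$, $(a,b)$ is a good arc for $(v,w)$ if: (i) $b\neq w$; (ii) for every vertex $u\neq w$, $G\setminus(a,b)$ has a path from $u$ to $v$; (iii) for every vertex $u$, either $G\setminus(a,b)$ has a path from $w$ to $u$, or $G$ has a path from $w$ to $u$ that contains the arc $(a,b)$ and such that every vertex of its subpath from $b$ to $u$ has in-degree one in $G$. *)

theory Defs
  imports Main
begin

definition digraph :: "'a set \<Rightarrow> ('a \<times> 'a) set \<Rightarrow> bool" where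
  "digraph V E \<longleftrightarrow> finite V \<and> E \<subseteq> V \<times> V"

definition is_path :: "'a set \<Rightarrow> ('a \<times> 'a) set \<Rightarrow> 'a list \<Rightarrow> bool" where
  "is_path V E xs \<longleftrightarrow> xs \<noteq> [] \<and> distinct xs \<and> set xs \<subseteq> V \<and>
     (\<forall>i. Suc i < length xs \<longrightarrow> (xs ! i, xs ! Suc i) \<in> E)"

definition path_from_to :: "'a set \<Rightarrow> ('a \<times> 'a) set \<Rightarrow> 'a list \<Rightarrow> 'a \<Rightarrow> 'a \<Rightarrow> bool" where
  "path_from_to V E xs u v \<longleftrightarrow> is_path V E xs \<and> hd xs = u \<and> last xs = v"

definition has_path :: "'a set \<Rightarrow> ('a \<times> 'a) set \<Rightarrow> 'a \<Rightarrow> 'a \<Rightarrow> bool" where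
  "has_path V E u v \<longleftrightarrow> (\<exists>xs. path_from_to V E xs u v)"

definition strongly_connected :: "'a set \<Rightarrow> ('a \<times> 'a) set \<Rightarrow> bool" where
  "strongly_connected V E \<longleftrightarrow> (\<forall>u\<in>V. \<forall>v\<in>V. has_path V E u v)"

definition in_degree :: "('a \<times> 'a) set \<Rightarrow> 'a \<Rightarrow> nat" where
  "in_degree E y = card {x. (x, y) \<in> E}"

definition good_arc :: "'a set \<Rightarrow> ('a \<times> 'a) set \<Rightarrow> 'a \<times> 'a \<Rightarrow> 'a \<times> 'a \<Rightarrow> bool" where
  "good_arc V E ab vw \<longleftrightarrow> (case ab of (a, b) \<Rightarrow> case vw of (v, w) \<Rightarrow>
     ab \<in> E \<and> vw \<in> E \<and>
     b \<noteq> w \<and>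
     (\<forall>u\<in>V. u \<noteq> w \<longrightarrow> has_path V (E - {(a, b)}) u v) \<and>
     (\<forall>u\<in>V. has_path V (E - {(a, b)}) w u \<or>
        (\<exists>xs i. path_from_to V E xs w u \<and> Suc i < length xs \<and>
           xs ! i = a \<and> xs ! Suc i = b \<and>
           (\<forall>j. Suc i \<le> j \<and> j < length xs \<longrightarrow> in_degree E (xs ! j) = 1))))"

end

theory Submission
  imports Defs
begin

text \<open>If deleting some arc (a, b) with b \<noteq> w leaves the digraph strongly connected, that arc
  is good. Otherwise take a maximal proper vertex set U containing w that induces a strongly
  connected subgraph, and contains v unless U = {w}. An ear of U (a path leaving U and
  returning to it, through vertices outside U) extends U to a strongly connected set, so by
  maximality U and the ear span the digraph. Then every arc entering an inner vertex y of the ear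
  is an ear arc, since any other arc into y could be deleted without losing strong connectivity;
  hence inner ear vertices have in-degree one. The first arc of the ear is good: the remaining
  arcs of U and the ear still lead every vertex to v, and w reaches the ear vertices along a
  path through U followed by the ear, whose vertices after the first ear arc have in-degree one.\<close>

lemma is_path_iff:
  "is_path V E xs \<longleftrightarrow>
     xs \<noteq> [] \<and> distinct xs \<and> set xs \<subseteq> V \<and> successively (\<lambda>x y. (x, y) \<in> E) xs"
  unfolding is_path_def successively_conv_nth by blast

lemma successively_imp_rtrancl:
  assumes "successively (\<lambda>x y. (x, y) \<in> E) xs" and "xs \<noteq> []"
  shows "(hd xs, last xs) \<in> E\<^sup>*"
  using assms by (induction "\<lambda>x y. (x, y) \<in> E" xs rule: successively.induct) auto

lemma rtrancl_imp_path_from_to: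
  assumes "(u, v) \<in> E\<^sup>*" and "E \<subseteq> V \<times> V" and "u \<in> V"
  shows "\<exists>xs. path_from_to V E xs u v"
  using assms(1,3)
proof (induction rule: converse_rtrancl_induct)
  case base
  then show ?case
    by (intro exI[of _ "[v]"]) (simp add: path_from_to_def is_path_iff)
next
  case (step x y)
  then obtain ys where ys: "path_from_to V E ys y v"
    using assms(2) by blast
  show ?case
  proof (cases "x \<in> set ys")
    case True
    then obtain as bs where "ys = as @ x # bs"
      by (meson split_list)
    then show ?thesis
      using ys by (intro exI[of _ "x # bs"])
        (auto simp: path_from_to_def is_path_iff successively_append_iff)
  next
    case False
    then show ?thesis
      using ys step by (intro exI[of _ "x # ys"])
        (auto simp: path_from_to_def is_path_iff successively_Cons)
  qed
qed

lemma has_path_iff_rtrancl: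
  assumes "E \<subseteq> V \<times> V" and "u \<in> V"
  shows "has_path V E u v \<longleftrightarrow> (u, v) \<in> E\<^sup>*"
  using rtrancl_imp_path_from_to[OF _ assms] successively_imp_rtrancl
  by (auto simp: has_path_def path_from_to_def is_path_iff)

lemma path_from_to_mono:
  assumes "path_from_to V E xs a b" and "V \<subseteq> V'" and "E \<subseteq> E'"
  shows "path_from_to V' E' xs a b"
  using assms successively_mono[of "\<lambda>x y. (x, y) \<in> E" xs "\<lambda>x y. (x, y) \<in> E'"]
  by (auto simp: path_from_to_def is_path_iff)

lemma path_from_to_append:
  assumes "path_from_to V E xs a b" and "path_from_to V E ys c d"
    and "(b, c) \<in> E" and "set xs \<inter> set ys = {}"
  shows "path_from_to V E (xs @ ys) a d"
  using assms by (auto simp: path_from_to_def is_path_iff successively_append_iff)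

definition strongly_connected_on :: "('a \<times> 'a) set \<Rightarrow> 'a set \<Rightarrow> bool" where
  "strongly_connected_on E U \<longleftrightarrow> (\<forall>a\<in>U. \<forall>b\<in>U. (a, b) \<in> (E \<inter> U \<times> U)\<^sup>*)"

lemma strongly_connected_iff_on:
  assumes "E \<subseteq> V \<times> V"
  shows "strongly_connected V E \<longleftrightarrow> strongly_connected_on E V"
  using has_path_iff_rtrancl[OF assms] Int_absorb2[OF assms]
  by (simp add: strongly_connected_def strongly_connected_on_def)

lemma rtrancl_exit_arc:
  "(a, b) \<in> E\<^sup>* \<Longrightarrow> a \<in> U \<Longrightarrow> b \<notin> U \<Longrightarrow> \<exists>x y. (x, y) \<in> E \<and> x \<in> U \<and> y \<notin> U"
  by (induction rule: rtrancl_induct) auto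

definition path_arcs :: "'a list \<Rightarrow> ('a \<times> 'a) set" where
  "path_arcs xs = set (zip xs (tl xs))"

lemma path_arcs_simps [simp]:
  "path_arcs [] = {}"
  "path_arcs [x] = {}"
  "path_arcs (x # y # xs) = insert (x, y) (path_arcs (y # xs))"
  by (simp_all add: path_arcs_def)

lemma path_arcs_Cons:
  "xs \<noteq> [] \<Longrightarrow> path_arcs (x # xs) = insert (x, hd xs) (path_arcs xs)"
  by (cases xs) auto

lemma path_arcs_snoc:
  "xs \<noteq> [] \<Longrightarrow> path_arcs (xs @ [y]) = insert (last xs, y) (path_arcs xs)"
  by (induction xs rule: induct_list012) auto

lemma fst_path_arcs: "fst ` path_arcs xs = set (butlast xs)"
  by (induction xs rule: induct_list012) auto

lemma snd_path_arcs: "snd ` path_arcs xs = set (tl xs)"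
  by (induction xs rule: induct_list012) auto

lemma path_arcs_subset: "path_arcs xs \<subseteq> set xs \<times> set xs"
  by (induction xs rule: induct_list012) auto

lemma successively_iff_path_arcs:
  "successively (\<lambda>x y. (x, y) \<in> E) xs \<longleftrightarrow> path_arcs xs \<subseteq> E"
  by (induction "\<lambda>x y. (x, y) \<in> E" xs rule: successively.induct) auto

lemma rtrancl_path_arcs:
  "x \<in> set xs \<Longrightarrow> (hd xs, x) \<in> (path_arcs xs)\<^sup>* \<and> (x, last xs) \<in> (path_arcs xs)\<^sup>*"
proof (induction xs arbitrary: x rule: induct_list012)
  case (3 a b xs)
  let ?R = "path_arcs (a # b # xs)"
  have IH: "(b, y) \<in> ?R\<^sup>* \<and> (y, last (b # xs)) \<in> ?R\<^sup>*" if "y \<in> set (b # xs)" for y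
    using "3.IH"(2)[OF that] rtrancl_mono[of "path_arcs (b # xs)" ?R] by (simp add: subset_iff)
  have ab: "(a, b) \<in> ?R"
    by simp
  show ?case
  proof (cases "x = a")
    case True
    then show ?thesis
      using IH[of b] ab by (auto intro: converse_rtrancl_into_rtrancl)
  next
    case False
    then show ?thesis
      using IH[of x] ab "3.prems" by (auto intro: converse_rtrancl_into_rtrancl)
  qed
qed auto

lemma path_arcs_pred_unique:
  "distinct xs \<Longrightarrow> (x, y) \<in> path_arcs xs \<Longrightarrow> (x', y) \<in> path_arcs xs \<Longrightarrow> x = x'"
proof (induction xs rule: induct_list012)
  case (3 a b xs)
  have "(p, b) \<notin> path_arcs (b # xs)" for p
    using "3.prems"(1) snd_path_arcs[of "b # xs"] by force
  then show ?case
    using 3 by auto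
qed auto

definition ear :: "('a \<times> 'a) set \<Rightarrow> 'a set \<Rightarrow> 'a \<Rightarrow> 'a list \<Rightarrow> 'a \<Rightarrow> bool" where
  "ear E U y0 ys ym \<longleftrightarrow> y0 \<in> U \<and> ym \<in> U \<and> ys \<noteq> [] \<and> distinct ys \<and> set ys \<inter> U = {} \<and>
     path_arcs (y0 # ys @ [ym]) \<subseteq> E"

lemma ear_exists:
  assumes "E \<subseteq> V \<times> V" and "strongly_connected_on E V"
    and "U \<subseteq> V" and "U \<noteq> V" and "u \<in> U"
  shows "\<exists>y0 ys ym. ear E U y0 ys ym"
proof -
  have reach: "(a, b) \<in> E\<^sup>*" if "a \<in> V" "b \<in> V" for a b
    using assms(2) that unfolding strongly_connected_on_def Int_absorb2[OF assms(1)] by blast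
  obtain x where "x \<in> V" "x \<notin> U"
    using assms(3,4) by blast
  then obtain y0 y1 where arc: "(y0, y1) \<in> E" "y0 \<in> U" "y1 \<notin> U"
    using rtrancl_exit_arc[OF reach[of u x]] assms(3,5) by blast
  then have "y1 \<in> V"
    using assms(1) by blast
  then obtain xs where xs: "path_from_to V E xs y1 u"
    using rtrancl_imp_path_from_to[OF reach[of y1 u] assms(1)] assms(3,5) by blast
  then have "\<exists>y\<in>set xs. y \<in> U"
    using assms(5) by (auto simp: path_from_to_def is_path_def)
  then obtain ys ym zs where split: "xs = ys @ ym # zs" "ym \<in> U" "\<forall>y\<in>set ys. y \<notin> U"
    using split_list_first_prop[of xs "\<lambda>y. y \<in> U"] by blast
  have "ys \<noteq> []" and "hd ys = y1"
    using split(1,2) xs arc(3) by (auto simp: path_from_to_def hd_append split: if_splits)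
  moreover have "successively (\<lambda>x y. (x, y) \<in> E) (ys @ [ym])"
    using xs split(1) by (simp add: path_from_to_def is_path_iff successively_append_iff)
  moreover have "distinct ys"
    using xs split(1) by (simp add: path_from_to_def is_path_def)
  ultimately have "ear E U y0 ys ym"
    using split(2,3) arc(1,2) by (auto simp: ear_def successively_iff_path_arcs path_arcs_Cons)
  then show ?thesis
    by blast
qed

lemma ear_of_cycle:
  assumes "E \<subseteq> V \<times> V" and "strongly_connected_on E V"
    and "(v, w) \<in> E" and "v \<noteq> w"
  shows "\<exists>ys. ear E {w} w ys w \<and> last ys = v"
proof -
  have "v \<in> V" "w \<in> V"
    using assms(1,3) by auto
  then have "(w, v) \<in> E\<^sup>*"
    using assms(2) unfolding strongly_connected_on_def Int_absorb2[OF assms(1)] by blast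
  then obtain xs where xs: "path_from_to V E xs w v"
    using rtrancl_imp_path_from_to[OF _ assms(1) \<open>w \<in> V\<close>] by blast
  then obtain ys where ys: "xs = w # ys"
    by (cases xs) (auto simp: path_from_to_def is_path_def)
  have "ys \<noteq> []"
    using xs ys assms(4) by (auto simp: path_from_to_def)
  then have "ear E {w} w ys w" and "last ys = v"
    using xs ys assms(3)
    by (auto simp: ear_def path_from_to_def is_path_iff successively_iff_path_arcs path_arcs_Cons
        path_arcs_snoc)
  then show ?thesis
    by blast
qed

lemma rtrancl_ear:
  assumes "strongly_connected_on E U" and "ear E U y0 ys ym"
    and "a \<in> U \<union> set ys" and "b \<in> U \<union> set ys"
  shows "(a, b) \<in> ((E \<inter> U \<times> U) \<union> path_arcs (y0 # ys @ [ym]))\<^sup>*"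
proof -
  let ?H = "(E \<inter> U \<times> U) \<union> path_arcs (y0 # ys @ [ym])"
  have mono_U: "(E \<inter> U \<times> U)\<^sup>* \<subseteq> ?H\<^sup>*" and mono_ear: "(path_arcs (y0 # ys @ [ym]))\<^sup>* \<subseteq> ?H\<^sup>*"
    by (rule rtrancl_mono, blast)+
  have y0: "y0 \<in> U" and ym: "ym \<in> U"
    using assms(2) by (auto simp: ear_def)
  have in_U: "(x, y) \<in> ?H\<^sup>*" if "x \<in> U" "y \<in> U" for x y
    using assms(1) that mono_U unfolding strongly_connected_on_def by blast
  have "(x, y0) \<in> ?H\<^sup>* \<and> (y0, x) \<in> ?H\<^sup>*" if "x \<in> U \<union> set ys" for x
  proof (cases "x \<in> U")
    case True
    then show ?thesis
      using in_U y0 by blast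
  next
    case False
    then have "x \<in> set (y0 # ys @ [ym])"
      using that by simp
    then have "(y0, x) \<in> ?H\<^sup>*" and "(x, ym) \<in> ?H\<^sup>*"
      using rtrancl_path_arcs mono_ear by fastforce+
    then show ?thesis
      using in_U[OF ym y0] by (meson rtrancl_trans)
  qed
  then show ?thesis
    using assms(3,4) by (meson rtrancl_trans)
qed

lemma strongly_connected_on_ear:
  assumes "strongly_connected_on E U" and "ear E U y0 ys ym"
  shows "strongly_connected_on E (U \<union> set ys)"
proof -
  let ?W = "U \<union> set ys"
  have "path_arcs (y0 # ys @ [ym]) \<subseteq> E \<inter> ?W \<times> ?W"
    using assms(2) path_arcs_subset[of "y0 # ys @ [ym]"] by (auto simp: ear_def)
  then have "(E \<inter> U \<times> U) \<union> path_arcs (y0 # ys @ [ym]) \<subseteq> E \<inter> ?W \<times> ?W"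
    by blast
  then show ?thesis
    using rtrancl_ear[OF assms] rtrancl_mono unfolding strongly_connected_on_def by blast
qed

lemma ear_subset:
  assumes "E \<subseteq> V \<times> V" and "ear E U y0 ys ym"
  shows "set ys \<subseteq> V"
proof -
  have "set ys \<subseteq> snd ` path_arcs (y0 # ys @ [ym])"
    by (auto simp: snd_path_arcs)
  also have "\<dots> \<subseteq> snd ` E"
    using assms(2) by (auto simp: ear_def)
  also have "\<dots> \<subseteq> V"
    using assms(1) by auto
  finally show ?thesis .
qed

lemma spanning_ear_exists:
  assumes "E \<subseteq> V \<times> V" and "finite V" and "strongly_connected_on E V"
    and "card V \<ge> 2" and "(v, w) \<in> E"
  obtains U y0 ys ym where "strongly_connected_on E U" and "w \<in> U" and "ear E U y0 ys ym"
    and "U \<union> set ys = V" and "v \<in> U \<or> U = {w} \<and> v = last ys"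
proof -
  let ?F = "{U. U \<subseteq> V \<and> U \<noteq> V \<and> w \<in> U \<and> strongly_connected_on E U \<and> (v \<in> U \<or> U = {w})}"
  have "w \<in> V"
    using assms(1,5) by blast
  moreover have "{w} \<noteq> V"
    using assms(4) by auto
  ultimately have "{w} \<in> ?F"
    by (auto simp: strongly_connected_on_def)
  moreover have "finite ?F"
    using assms(2) by (intro finite_subset[of ?F "Pow V"]) auto
  ultimately obtain U where "U \<in> ?F" and maximal: "\<forall>U'\<in>?F. U \<subseteq> U' \<longrightarrow> U = U'"
    using finite_has_maximal2[of ?F "{w}"] by auto
  then have U: "U \<subseteq> V" "U \<noteq> V" "w \<in> U" "strongly_connected_on E U" "v \<in> U \<or> U = {w}"
    by auto
  obtain y0 ys ym where ear: "ear E U y0 ys ym" and v: "v \<in> U \<or> U = {w} \<and> v = last ys"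
  proof (cases "v \<in> U")
    case True
    then show ?thesis
      using ear_exists[OF assms(1,3) U(1-3)] that by blast
  next
    case False
    with U(3,5) have "U = {w}" and "v \<noteq> w"
      by auto
    then show ?thesis
      using ear_of_cycle[OF assms(1,3,5)] that by blast
  qed
  have "U \<union> set ys = V"
  proof (rule ccontr)
    assume "U \<union> set ys \<noteq> V"
    moreover have "set ys \<subseteq> V" and "v \<in> U \<union> set ys"
      using ear_subset[OF assms(1) ear] v ear by (auto simp: ear_def)
    ultimately have "U \<union> set ys \<in> ?F"
      using U strongly_connected_on_ear[OF U(4) ear] by auto
    then have "set ys \<subseteq> U"
      using maximal by blast
    then show False
      using ear unfolding ear_def by (metis Int_absorb2 set_empty)
  qed
  then show ?thesis
    using that U(3,4) ear v by blast
qed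

lemma in_degree_ear_eq_1:
  assumes "strongly_connected_on E U" and "ear E U y0 ys ym" and "U \<union> set ys = V"
    and critical: "\<And>a b. (a, b) \<in> E \<Longrightarrow> b \<notin> U \<Longrightarrow> \<not> strongly_connected_on (E - {(a, b)}) V"
    and "y \<in> set ys"
  shows "in_degree E y = 1"
proof -
  let ?H = "(E \<inter> U \<times> U) \<union> path_arcs (y0 # ys @ [ym])"
  have ear: "y0 \<in> U" "ym \<in> U" "ys \<noteq> []" "distinct ys" "set ys \<inter> U = {}"
    "path_arcs (y0 # ys @ [ym]) \<subseteq> E"
    using assms(2) by (auto simp: ear_def)
  have "y \<notin> U"
    using ear(5) assms(5) by blast
  have H: "?H \<subseteq> E \<inter> V \<times> V"
    using ear path_arcs_subset[of "y0 # ys @ [ym]"] assms(3) by auto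
  have in_H: "(x, y) \<in> ?H" if "(x, y) \<in> E" for x
  proof (rule ccontr)
    assume "(x, y) \<notin> ?H"
    then have "?H\<^sup>* \<subseteq> ((E - {(x, y)}) \<inter> V \<times> V)\<^sup>*"
      using H by (intro rtrancl_mono) blast
    then have "strongly_connected_on (E - {(x, y)}) V"
      using rtrancl_ear[OF assms(1,2)] unfolding strongly_connected_on_def assms(3)[symmetric]
      by blast
    then show False
      using critical that \<open>y \<notin> U\<close> by blast
  qed
  have arcs: "path_arcs (y0 # ys @ [ym]) = insert (last ys, ym) (path_arcs (y0 # ys))"
    using path_arcs_snoc[of "y0 # ys" ym] ear(3) by simp
  have pred: "(x, y) \<in> path_arcs (y0 # ys)" if "(x, y) \<in> E" for x
    using in_H[OF that] arcs \<open>y \<notin> U\<close> ear(2) by auto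
  have "y \<in> snd ` path_arcs (y0 # ys)"
    using assms(5) by (simp add: snd_path_arcs)
  then obtain p where p: "(p, y) \<in> path_arcs (y0 # ys)"
    by auto
  have "distinct (y0 # ys)"
    using ear by auto
  then have "x = p" if "(x, y) \<in> E" for x
    using path_arcs_pred_unique[OF _ pred[OF that] p] by simp
  moreover have "(p, y) \<in> E"
    using p ear(6) unfolding arcs by blast
  ultimately have "{x. (x, y) \<in> E} = {p}"
    by blast
  then show ?thesis
    by (simp add: in_degree_def)
qed

lemma path_through_ear:
  assumes "strongly_connected_on E U" and "ear E U y0 ys ym" and "U \<union> set ys \<subseteq> V"
    and "w \<in> U" and "u \<in> set ys"
  shows "\<exists>xs i. path_from_to V E xs w u \<and> Suc i < length xs \<and> xs ! i = y0 \<and>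
    xs ! Suc i = hd ys \<and> set (drop (Suc i) xs) \<subseteq> set ys"
proof -
  have ear: "y0 \<in> U" "ys \<noteq> []" "distinct ys" "set ys \<inter> U = {}"
    "path_arcs (y0 # ys @ [ym]) \<subseteq> E"
    using assms(2) by (auto simp: ear_def)
  have "(w, y0) \<in> (E \<inter> U \<times> U)\<^sup>*"
    using assms(1,4) ear(1) by (simp add: strongly_connected_on_def)
  then obtain ps where "path_from_to U (E \<inter> U \<times> U) ps w y0"
    using rtrancl_imp_path_from_to[of w y0 "E \<inter> U \<times> U" U] assms(4) by blast
  then have ps: "path_from_to V E ps w y0" "set ps \<subseteq> U"
    using path_from_to_mono[of U "E \<inter> U \<times> U" ps w y0 V E] assms(3)
    by (auto simp: path_from_to_def is_path_def)
  obtain as bs where split: "ys = as @ u # bs"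
    using assms(5) split_list by metis
  let ?qs = "as @ [u]"
  have "path_arcs ys \<subseteq> E"
    using ear(2,5) path_arcs_Cons[of "ys @ [ym]" y0] path_arcs_snoc[of ys ym] by auto
  then have "successively (\<lambda>x y. (x, y) \<in> E) ?qs"
    using split by (simp add: successively_iff_path_arcs[symmetric] successively_append_iff)
  then have qs: "path_from_to V E ?qs (hd ys) u"
    using split ear(3) assms(3) by (auto simp: path_from_to_def is_path_iff hd_append)
  have "(y0, hd ys) \<in> E"
    using ear(2,5) path_arcs_Cons[of "ys @ [ym]" y0] by auto
  moreover have "set ps \<inter> set ?qs = {}"
    using ps(2) ear(4) split by auto
  ultimately have "path_from_to V E (ps @ ?qs) w u"
    using path_from_to_append[OF ps(1) qs] by blast
  moreover have "ps \<noteq> []"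
    using ps(1) by (simp add: path_from_to_def is_path_def)
  ultimately show ?thesis
    using ps(1) split
    by (intro exI[of _ "ps @ ?qs"] exI[of _ "length ps - 1"])
      (auto simp: path_from_to_def nth_append last_conv_nth hd_append hd_conv_nth)
qed

lemma good_arc_first_ear_arc:
  assumes "E \<subseteq> V \<times> V" and "(v, w) \<in> E" and "strongly_connected_on E U" and "w \<in> U"
    and "ear E U y0 ys ym" and "U \<union> set ys = V" and "v \<in> U \<or> U = {w} \<and> v = last ys"
    and "\<forall>y\<in>set ys. in_degree E y = 1"
  shows "good_arc V E (y0, hd ys) (v, w)"
proof -
  let ?e = "(y0, hd ys)"
  let ?H = "(E \<inter> U \<times> U) \<union> path_arcs (ys @ [ym])"
  have ear: "y0 \<in> U" "ym \<in> U" "ys \<noteq> []" "set ys \<inter> U = {}"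
    "path_arcs (y0 # ys @ [ym]) \<subseteq> E"
    using assms(5) by (auto simp: ear_def)
  have arcs: "path_arcs (y0 # ys @ [ym]) = insert ?e (path_arcs (ys @ [ym]))"
    using path_arcs_Cons[of "ys @ [ym]" y0] ear(3) by simp
  have "hd ys \<notin> U"
    using ear(3,4) hd_in_set by blast
  moreover have "?e \<notin> path_arcs (ys @ [ym])"
    using fst_path_arcs[of "ys @ [ym]"] ear(1,4) by force
  ultimately have "?H \<subseteq> E - {?e}"
    using ear(5) arcs by auto
  then have avoid: "has_path V (E - {?e}) a b" if "a \<in> V" "(a, b) \<in> ?H\<^sup>*" for a b
    using has_path_iff_rtrancl[of "E - {?e}" V a b] assms(1) that rtrancl_mono by blast
  have in_U: "(a, b) \<in> ?H\<^sup>*" if "a \<in> U" "b \<in> U" for a b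
    using assms(3) that rtrancl_mono[of "E \<inter> U \<times> U" ?H]
    unfolding strongly_connected_on_def by blast
  have "path_arcs ys \<subseteq> path_arcs (ys @ [ym])"
    using path_arcs_snoc[OF ear(3)] by blast
  then have along_ear: "(a, last ys) \<in> ?H\<^sup>*" "(a, ym) \<in> ?H\<^sup>*" if "a \<in> set ys" for a
    using rtrancl_path_arcs[of a ys] rtrancl_path_arcs[of a "ys @ [ym]"] that
      rtrancl_mono[of "path_arcs ys" ?H] rtrancl_mono[of "path_arcs (ys @ [ym])" ?H] by auto
  have to_v: "has_path V (E - {?e}) u v" if "u \<in> V" "u \<noteq> w" for u
  proof -
    have "(u, v) \<in> ?H\<^sup>*"
    proof (cases "u \<in> U")
      case True
      then have "v \<in> U"
        using assms(7) that(2) by auto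
      then show ?thesis
        using in_U True by blast
    next
      case False
      then have "u \<in> set ys"
        using that(1) assms(6) by blast
      then show ?thesis
        using assms(7) along_ear in_U[OF ear(2)] by (meson rtrancl_trans)
    qed
    then show ?thesis
      using avoid that(1) by blast
  qed
  have from_w: "has_path V (E - {?e}) w u \<or>
      (\<exists>xs i. path_from_to V E xs w u \<and> Suc i < length xs \<and> xs ! i = y0 \<and> xs ! Suc i = hd ys \<and>
        (\<forall>j. Suc i \<le> j \<and> j < length xs \<longrightarrow> in_degree E (xs ! j) = 1))" if "u \<in> V" for u
  proof (cases "u \<in> U")
    case True
    then show ?thesis
      using avoid in_U assms(4,6) by blast
  next
    case False
    then have "u \<in> set ys"
      using that assms(6) by blast
    then obtain xs i where "path_from_to V E xs w u" "Suc i < length xs" "xs ! i = y0"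
      "xs ! Suc i = hd ys" "set (drop (Suc i) xs) \<subseteq> set ys"
      using path_through_ear[OF assms(3,5) _ assms(4)] assms(6) by blast
    moreover have "xs ! j \<in> set (drop (Suc i) xs)" if "Suc i \<le> j" "j < length xs" for j
      using that nth_drop[of "Suc i" xs "j - Suc i"] nth_mem[of "j - Suc i" "drop (Suc i) xs"]
      by simp
    ultimately show ?thesis
      using assms(8) by blast
  qed
  show ?thesis
    unfolding good_arc_def using ear arcs assms(2) \<open>hd ys \<notin> U\<close> assms(4) to_v from_w by auto
qed

theorem lemma1:
  assumes "digraph V E" and "strongly_connected V E" and "card V \<ge> 2"
    and "(v, w) \<in> E"
  shows "\<exists>a b. (a, b) \<in> E \<and> good_arc V E (a, b) (v, w)"
proof -
  have E: "E \<subseteq> V \<times> V" and "finite V"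
    using assms(1) by (auto simp: digraph_def)
  show ?thesis
  proof (cases "\<exists>a b. (a, b) \<in> E \<and> b \<noteq> w \<and> strongly_connected V (E - {(a, b)})")
    case True
    then obtain a b where "(a, b) \<in> E" "b \<noteq> w" "strongly_connected V (E - {(a, b)})"
      by blast
    moreover have "v \<in> V" "w \<in> V"
      using assms(4) E by auto
    ultimately have "good_arc V E (a, b) (v, w)"
      using assms(4) by (simp add: good_arc_def strongly_connected_def)
    then show ?thesis
      using \<open>(a, b) \<in> E\<close> by blast
  next
    case False
    obtain U y0 ys ym where U: "strongly_connected_on E U" "w \<in> U" "ear E U y0 ys ym"
      "U \<union> set ys = V" "v \<in> U \<or> U = {w} \<and> v = last ys"
      using spanning_ear_exists[OF E \<open>finite V\<close> _ assms(3,4)] assms(2)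
        strongly_connected_iff_on[OF E] by blast
    have "\<not> strongly_connected_on (E - {(a, b)}) V" if "(a, b) \<in> E" "b \<notin> U" for a b
      using False that U(2) strongly_connected_iff_on[of "E - {(a, b)}" V] E by blast
    then have "\<forall>y\<in>set ys. in_degree E y = 1"
      using in_degree_ear_eq_1[OF U(1,3,4)] by blast
    then show ?thesis
      using good_arc_first_ear_arc[OF E assms(4) U] by (auto simp: good_arc_def)
  qed
qed

end
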